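(* Let $\{a_i\},\{b_i\},\{c_i\},\{d_i\}$ ($i\in\mathbb{Z}$) be complex sequences and $m,n\ge0$ integers such that $a_j-c_j$, $a_j-d_j$, $b_j-c_j$, $b_j-d_j$ are nonzero for $-n\le j\le m$. Then $$\sum_{k=-n}^{m}(a_k-b_k)(c_k-d_k)\frac{\prod_{j=1}^{k-1}(a_j-c_j)}{\prod_{j=1}^{k}(a_j-d_j)}\frac{\prod_{j=1}^{k-1}(b_j-d_j)}{\prod_{j=1}^{k}(b_j-c_j)} =\frac{\prod_{j=1}^{m}(a_j-c_j)}{\prod_{j=1}^{m}(a_j-d_j)}\frac{\prod_{j=1}^{m}(b_j-d_j)}{\prod_{j=1}^{m}(b_j-c_j)}-\frac{\prod_{j=-n}^{0}(a_j-d_j)}{\prod_{j=-n}^{0}(a_j-c_j)}\frac{\prod_{j=-n}^{0}(b_j-c_j)}{\prod_{j=-n}^{0}(b_j-d_j)}.$$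
   Context: Products over integer ranges follow the convention: $\prod_{j=k}^{m}A_j=A_k\cdots A_m$ if $m\ge k$; $=1$ if $m=k-1$; $=(A_{m+1}\cdots A_{k-1})^{-1}$ if $m\le k-2$. *)

theory Defs
  imports Complex_Main
begin

definition prodZ :: "(int \<Rightarrow> complex) \<Rightarrow> int \<Rightarrow> int \<Rightarrow> complex" where
  "prodZ A k m = (if m \<ge> k - 1 then (\<Prod>j\<in>{k..m}. A j)
                  else inverse (\<Prod>j\<in>{m+1..k-1}. A j))"

end

theory Submission
  imports Defs
begin

text \<open>Every summand is a difference \<open>T k - T (k - 1)\<close> of consecutive values of the right-hand
  product quotient \<open>T\<close>: passing from \<open>k - 1\<close> to \<open>k\<close> multiplies \<open>T\<close> by
  \<open>(a\<^sub>k - c\<^sub>k)(b\<^sub>k - d\<^sub>k) / ((a\<^sub>k - d\<^sub>k)(b\<^sub>k - c\<^sub>k))\<close>, and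
  \<open>(a - c)(b - d) - (a - d)(b - c) = (a - b)(c - d)\<close>. The sum therefore telescopes to
  \<open>T m - T (-n - 1)\<close>, and the range convention for products turns \<open>T (-n - 1)\<close> into
  the quotient of products over \<open>[-n, 0]\<close>.\<close>

lemma prodZ_upper_step:
  assumes "k < l \<Longrightarrow> A k \<noteq> 0"
  shows "prodZ A l k = prodZ A l (k - 1) * A k"
proof -
  consider "l \<le> k" | "k = l - 1" | "k < l - 1" by linarith
  then show ?thesis
  proof cases
    case 1
    then have "{l..k} = insert k {l..k - 1}" by auto
    with 1 show ?thesis by (simp add: prodZ_def mult.commute)
  next
    case 2
    with assms show ?thesis by (simp add: prodZ_def)
  next
    case 3
    then have "{k..l - 1} = insert k {k + 1..l - 1}" by auto
    with 3 assms show ?thesis by (simp add: prodZ_def)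
  qed
qed

lemma prodZ_reversed_range:
  assumes "k \<le> l"
  shows "prodZ A l (k - 1) = inverse (prodZ A k (l - 1))"
  using assms by (simp add: prodZ_def)

lemma sum_atLeastAtMost_int_telescope:
  fixes T :: "int \<Rightarrow> 'a::ab_group_add"
  assumes "lo - 1 \<le> m"
  shows "(\<Sum>k\<in>{lo..m}. T k - T (k - 1)) = T m - T (lo - 1)"
  using assms
proof (induction m rule: int_ge_induct)
  case base
  then show ?case by simp
next
  case (step i)
  then have "{lo..i + 1} = insert (i + 1) {lo..i}" by auto
  with step show ?case by simp
qed

lemma quotient_product_step:
  fixes a b c d X Y Z W :: "'a::field"
  assumes "a - d \<noteq> 0" and "b - c \<noteq> 0"
  shows "(a - b) * (c - d) * (X / (Y * (a - d))) * (Z / (W * (b - c)))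
    = (X * (a - c) / (Y * (a - d))) * (Z * (b - d) / (W * (b - c))) - (X / Y) * (Z / W)"
proof (cases "Y = 0 \<or> W = 0")
  case True
  then show ?thesis by auto
next
  case False
  with assms show ?thesis by (simp add: divide_simps) (simp add: algebra_simps)
qed

theorem corollary3p4:
  fixes a b c d :: "int \<Rightarrow> complex" and m n :: int
  assumes "m \<ge> 0" and "n \<ge> 0"
    and "\<And>j. -n \<le> j \<Longrightarrow> j \<le> m \<Longrightarrow>
           a j - c j \<noteq> 0 \<and> a j - d j \<noteq> 0 \<and> b j - c j \<noteq> 0 \<and> b j - d j \<noteq> 0"
  shows "(\<Sum>k\<in>{-n..m}. (a k - b k) * (c k - d k)
            * (prodZ (\<lambda>j. a j - c j) 1 (k - 1) / prodZ (\<lambda>j. a j - d j) 1 k)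
            * (prodZ (\<lambda>j. b j - d j) 1 (k - 1) / prodZ (\<lambda>j. b j - c j) 1 k))
       = (prodZ (\<lambda>j. a j - c j) 1 m / prodZ (\<lambda>j. a j - d j) 1 m)
           * (prodZ (\<lambda>j. b j - d j) 1 m / prodZ (\<lambda>j. b j - c j) 1 m)
         - (prodZ (\<lambda>j. a j - d j) (-n) 0 / prodZ (\<lambda>j. a j - c j) (-n) 0)
           * (prodZ (\<lambda>j. b j - c j) (-n) 0 / prodZ (\<lambda>j. b j - d j) (-n) 0)"
proof -
  define T where "T k = (prodZ (\<lambda>j. a j - c j) 1 k / prodZ (\<lambda>j. a j - d j) 1 k)
           * (prodZ (\<lambda>j. b j - d j) 1 k / prodZ (\<lambda>j. b j - c j) 1 k)" for k
  have summand: "(a k - b k) * (c k - d k)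
            * (prodZ (\<lambda>j. a j - c j) 1 (k - 1) / prodZ (\<lambda>j. a j - d j) 1 k)
            * (prodZ (\<lambda>j. b j - d j) 1 (k - 1) / prodZ (\<lambda>j. b j - c j) 1 k)
          = T k - T (k - 1)" if "k \<in> {-n..m}" for k
  proof -
    from that assms(3)
    have nonzero: "a k - c k \<noteq> 0" "a k - d k \<noteq> 0" "b k - c k \<noteq> 0" "b k - d k \<noteq> 0"
      by auto
    have step: "prodZ A 1 k = prodZ A 1 (k - 1) * A k" if "A k \<noteq> 0" for A
      using that by (rule prodZ_upper_step)
    show ?thesis
      unfolding T_def step[of "\<lambda>j. a j - c j", OF nonzero(1)] step[of "\<lambda>j. a j - d j", OF nonzero(2)]
        step[of "\<lambda>j. b j - c j", OF nonzero(3)] step[of "\<lambda>j. b j - d j", OF nonzero(4)]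
      using nonzero(2,3) by (rule quotient_product_step)
  qed
  note sum.cong[OF refl summand]
  also have "(\<Sum>k\<in>{-n..m}. T k - T (k - 1)) = T m - T (-n - 1)"
    using assms(1,2) by (intro sum_atLeastAtMost_int_telescope) simp
  also have "T (-n - 1) = (prodZ (\<lambda>j. a j - d j) (-n) 0 / prodZ (\<lambda>j. a j - c j) (-n) 0)
           * (prodZ (\<lambda>j. b j - c j) (-n) 0 / prodZ (\<lambda>j. b j - d j) (-n) 0)"
    unfolding T_def using assms(2) by (simp add: prodZ_reversed_range divide_inverse mult.commute)
  finally show ?thesis by (simp only: T_def)
qed

end
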